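(* Let $H$ and $G$ be non-abelian simple groups and let $j\colon\mathrm{Aut}(H)\to\mathrm{Aut}(G)$ be an injective homomorphism with $j(\mathrm{Inn}(H))\subseteq\mathrm{Inn}(G)$. Assume $\mathrm{Aut}(G)$ is co-hopfian and $\mathrm{Out}(G)$ is hyperabelian. Let $N=j^{-1}(\mathrm{Inn}(G))$ (a normal subgroup of $\mathrm{Aut}(H)$ containing $\mathrm{Inn}(H)$), let $k\colon\mathrm{Out}(H)\to\mathrm{Out}(G)$ be the homomorphism induced by $j$, and let $\pi\colon\mathrm{Out}(H)=\mathrm{Aut}(H)/\mathrm{Inn}(H)\to\mathrm{Aut}(H)/N$ be the canonical projection. Then $j$ is a localization if and only if the following four conditions hold: (a) for every injective homomorphism $\kappa\colon\mathrm{Aut}(H)\to\mathrm{Aut}(G)$ there exists $\theta\in\mathrm{Aut}(\mathrm{Aut}(G))$ with $\theta\circ j=\kappa$ (i.e. $\mathrm{Aut}(\mathrm{Aut}(G))$ acts transitively, by composition, on the set of monomorphisms $\mathrm{Aut}(H)\to\mathrm{Aut}(G)$); (b) the only $\theta\in\mathrm{Aut}(\mathrm{Aut}(G))$ with $\theta\circ j=j$ is the identity; (c) for every homomorphism $\varphi'\colon\mathrm{Aut}(H)/N\to\mathrm{Aut}(G)$ there exists a unique homomorphism $\psi'\colon\mathrm{Out}(G)\to\mathrm{Aut}(G)$ with $\psi'\circ k=\varphi'\circ\pi$; (d) every homomorphism $\varphi\colon\mathrm{Aut}(H)\to\mathrm{Aut}(G)$ with $\mathrm{Inn}(H)\subseteq\ker\varphi$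 satisfies $N\subseteq\ker\varphi$.
   Context: A group homomorphism $i\colon X\to Y$ is a localization if for every homomorphism $\varphi\colon X\to Y$ there exists a unique homomorphism $\psi\colon Y\to Y$ with $\psi\circ i=\varphi$. A group is co-hopfian if every injective endomorphism is an automorphism. A group $A$ is hyperabelian if every non-trivial quotient of $A$ has a non-trivial abelian normal subgroup. $\mathrm{Out}(X)=\mathrm{Aut}(X)/\mathrm{Inn}(X)$. *)

theory Defs
  imports "HOL-Algebra.Algebra"
begin

definition simple_grp :: "('a, 'c) monoid_scheme \<Rightarrow> bool" where
  "simple_grp G \<longleftrightarrow> group G \<and> carrier G \<noteq> {\<one>\<^bsub>G\<^esub>} \<and>
     (\<forall>K. K \<lhd> G \<longrightarrow> K = {\<one>\<^bsub>G\<^esub>} \<or> K = carrier G)"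

definition nonabelian :: "('a, 'c) monoid_scheme \<Rightarrow> bool" where
  "nonabelian G \<longleftrightarrow> (\<exists>x\<in>carrier G. \<exists>y\<in>carrier G. x \<otimes>\<^bsub>G\<^esub> y \<noteq> y \<otimes>\<^bsub>G\<^esub> x)"

definition Inn :: "('a, 'c) monoid_scheme \<Rightarrow> ('a \<Rightarrow> 'a) set" where
  "Inn G = {(\<lambda>x\<in>carrier G. g \<otimes>\<^bsub>G\<^esub> x \<otimes>\<^bsub>G\<^esub> inv\<^bsub>G\<^esub> g) | g. g \<in> carrier G}"

definition Out :: "('a, 'c) monoid_scheme \<Rightarrow> ('a \<Rightarrow> 'a) set monoid" where
  "Out G = AutoGroup G Mod Inn G"

definition localization ::
  "('x \<Rightarrow> 'y) \<Rightarrow> ('x, 'c) monoid_scheme \<Rightarrow> ('y, 'd) monoid_scheme \<Rightarrow> bool" where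
  "localization i S T \<longleftrightarrow> i \<in> hom S T \<and>
     (\<forall>\<phi>\<in>hom S T.
        (\<exists>\<psi>\<in>hom T T. \<forall>x\<in>carrier S. \<psi> (i x) = \<phi> x) \<and>
        (\<forall>p1\<in>hom T T. \<forall>p2\<in>hom T T.
           (\<forall>x\<in>carrier S. p1 (i x) = \<phi> x) \<longrightarrow> (\<forall>x\<in>carrier S. p2 (i x) = \<phi> x)
           \<longrightarrow> (\<forall>y\<in>carrier T. p1 y = p2 y)))"

definition co_hopfian :: "('a, 'c) monoid_scheme \<Rightarrow> bool" where
  "co_hopfian S \<longleftrightarrow> (\<forall>f\<in>hom S S. inj_on f (carrier S) \<longrightarrow> f \<in> iso S S)"

definition hyperabelian :: "('a, 'c) monoid_scheme \<Rightarrow> bool" where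
  "hyperabelian A \<longleftrightarrow> (\<forall>K. K \<lhd> A \<and> K \<noteq> carrier A \<longrightarrow>
      (\<exists>M. M \<lhd> (A Mod K) \<and> M \<noteq> {\<one>\<^bsub>A Mod K\<^esub>} \<and>
           (\<forall>x\<in>M. \<forall>y\<in>M. x \<otimes>\<^bsub>A Mod K\<^esub> y = y \<otimes>\<^bsub>A Mod K\<^esub> x)))"

end

theory Submission
  imports Defs
begin

text \<open>
  For a simple group \<open>S\<close>, every normal subgroup of \<open>Aut(S)\<close> is trivial or contains \<open>Inn(S)\<close>
  (its commutators with inner automorphisms are inner), so a homomorphism out of \<open>Aut(S)\<close> is
  either injective or kills \<open>Inn(S)\<close>. Consequently, if \<open>\<psi> \<circ> j = \<phi>\<close> then \<open>\<psi>\<close> is injective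
  exactly when \<open>\<phi>\<close> is, and the localization property splits into two cases.
  For injective \<open>\<phi>\<close>, all extensions are automorphisms of \<open>Aut(G)\<close> by co-hopficity, so
  existence and uniqueness of extensions say that \<open>Aut(Aut(G))\<close> acts transitively (a) and freely (b)
  on the monomorphisms. For non-injective \<open>\<phi>\<close>, all extensions kill \<open>Inn(G)\<close> and factor through
  \<open>Out(G)\<close>; by (d) \<open>\<phi>\<close> factors through \<open>Aut(H)/N\<close>, and extensions along \<open>j\<close> correspond
  bijectively to extensions along \<open>k\<close>, which is (c).
\<close>

definition inner_aut :: "('a, 'c) monoid_scheme \<Rightarrow> 'a \<Rightarrow> ('a \<Rightarrow> 'a)" where
  "inner_aut S g = (\<lambda>x\<in>carrier S. g \<otimes>\<^bsub>S\<^esub> x \<otimes>\<^bsub>S\<^esub> inv\<^bsub>S\<^esub> g)"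

lemma Inn_eq_image: "Inn S = inner_aut S ` carrier S"
  by (auto simp: Inn_def inner_aut_def)

lemma carrier_AutoGroup: "carrier (AutoGroup S) = auto S"
  by (simp add: AutoGroup_def)

lemma one_AutoGroup: "\<one>\<^bsub>AutoGroup S\<^esub> = (\<lambda>x\<in>carrier S. x)"
  by (simp add: AutoGroup_def BijGroup_def)

lemma mult_AutoGroup:
  "f \<in> auto S \<Longrightarrow> g \<in> auto S \<Longrightarrow> f \<otimes>\<^bsub>AutoGroup S\<^esub> g = compose (carrier S) f g"
  by (simp add: AutoGroup_def BijGroup_def auto_def)

lemma AutoGroup_eq_one_iff:
  assumes "\<theta> \<in> carrier (AutoGroup S)"
  shows "\<theta> = \<one>\<^bsub>AutoGroup S\<^esub> \<longleftrightarrow> (\<forall>x\<in>carrier S. \<theta> x = x)"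
  using assms by (auto simp: carrier_AutoGroup one_AutoGroup auto_def Bij_def extensional_def)

lemma (in group) inner_aut_hom: "inner_aut G \<in> hom G (AutoGroup G)"
proof -
  have Bij: "inner_aut G \<in> hom G (BijGroup (carrier G))"
    using conjugation_is_hom by (simp add: inner_aut_def[abs_def])
  have "inner_aut G g \<in> hom G G" if "g \<in> carrier G" for g
    using that by (intro homI) (auto simp: inner_aut_def m_assoc inv_mult_group inv_solve_left)
  with Bij show ?thesis
    by (auto simp: hom_def AutoGroup_def BijGroup_def auto_def)
qed

lemma (in group) inner_aut_in_AutoGroup: "g \<in> carrier G \<Longrightarrow> inner_aut G g \<in> carrier (AutoGroup G)"
  using inner_aut_hom by (auto simp: hom_def)

lemma (in group) AutoGroup_mult_inner_aut:
  assumes \<alpha>: "\<alpha> \<in> carrier (AutoGroup G)" and g: "g \<in> carrier G"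
  shows "\<alpha> \<otimes>\<^bsub>AutoGroup G\<^esub> inner_aut G g = inner_aut G (\<alpha> g) \<otimes>\<^bsub>AutoGroup G\<^esub> \<alpha>"
proof -
  interpret \<alpha>: group_hom G G \<alpha>
    using \<alpha> by unfold_locales (simp add: carrier_AutoGroup auto_def)
  have "inner_aut G g \<in> auto G" "inner_aut G (\<alpha> g) \<in> auto G"
    using g inner_aut_in_AutoGroup by (simp_all add: carrier_AutoGroup)
  then show ?thesis
    using \<alpha> g by (auto simp: mult_AutoGroup carrier_AutoGroup inner_aut_def compose_def)
qed

lemma (in group) Inn_normal: "Inn G \<lhd> AutoGroup G"
proof -
  interpret Aut: group "AutoGroup G" by (rule AutoGroup)
  interpret c: group_hom G "AutoGroup G" "inner_aut G"
    by unfold_locales (rule inner_aut_hom)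
  show ?thesis
  proof (rule Aut.normal_invI)
    show "subgroup (Inn G) (AutoGroup G)"
      unfolding Inn_eq_image by (rule c.img_is_subgroup)
  next
    fix \<alpha> c assume \<alpha>: "\<alpha> \<in> carrier (AutoGroup G)" and "c \<in> Inn G"
    then obtain g where g: "g \<in> carrier G" and c: "c = inner_aut G g"
      by (auto simp: Inn_eq_image)
    have \<alpha>g: "\<alpha> g \<in> carrier G"
      using \<alpha> g by (auto simp: carrier_AutoGroup auto_def hom_def)
    have "\<alpha> \<otimes>\<^bsub>AutoGroup G\<^esub> c \<otimes>\<^bsub>AutoGroup G\<^esub> inv\<^bsub>AutoGroup G\<^esub> \<alpha> = inner_aut G (\<alpha> g)"
      using \<alpha> g \<alpha>g inner_aut_in_AutoGroup by (simp add: c AutoGroup_mult_inner_aut Aut.m_assoc)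
    then show "\<alpha> \<otimes>\<^bsub>AutoGroup G\<^esub> c \<otimes>\<^bsub>AutoGroup G\<^esub> inv\<^bsub>AutoGroup G\<^esub> \<alpha> \<in> Inn G"
      using \<alpha>g by (simp add: Inn_eq_image)
  qed
qed

lemma (in group) commutator_inner_aut:
  assumes \<alpha>: "\<alpha> \<in> carrier (AutoGroup G)" and g: "g \<in> carrier G"
  shows "inner_aut G g \<otimes>\<^bsub>AutoGroup G\<^esub> \<alpha> \<otimes>\<^bsub>AutoGroup G\<^esub> inv\<^bsub>AutoGroup G\<^esub> inner_aut G g
      \<otimes>\<^bsub>AutoGroup G\<^esub> inv\<^bsub>AutoGroup G\<^esub> \<alpha> = inner_aut G (g \<otimes> \<alpha> (inv g))"
proof -
  interpret Aut: group "AutoGroup G" by (rule AutoGroup)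
  interpret c: group_hom G "AutoGroup G" "inner_aut G"
    by unfold_locales (rule inner_aut_hom)
  have \<alpha>g: "\<alpha> (inv g) \<in> carrier G"
    using \<alpha> g by (auto simp: carrier_AutoGroup auto_def hom_def)
  let ?c = "inner_aut G g" and ?d = "inner_aut G (\<alpha> (inv g))"
  have c: "?c \<in> carrier (AutoGroup G)" and d: "?d \<in> carrier (AutoGroup G)"
    using g \<alpha>g by (simp_all add: inner_aut_in_AutoGroup)
  have "?c \<otimes>\<^bsub>AutoGroup G\<^esub> \<alpha> \<otimes>\<^bsub>AutoGroup G\<^esub> inv\<^bsub>AutoGroup G\<^esub> ?c \<otimes>\<^bsub>AutoGroup G\<^esub> inv\<^bsub>AutoGroup G\<^esub> \<alpha>
      = ?c \<otimes>\<^bsub>AutoGroup G\<^esub> (\<alpha> \<otimes>\<^bsub>AutoGroup G\<^esub> inner_aut G (inv g)) \<otimes>\<^bsub>AutoGroup G\<^esub> inv\<^bsub>AutoGroup G\<^esub> \<alpha>"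
    using g \<alpha> c by (simp add: Aut.m_assoc)
  also have "\<dots> = ?c \<otimes>\<^bsub>AutoGroup G\<^esub> (?d \<otimes>\<^bsub>AutoGroup G\<^esub> \<alpha>) \<otimes>\<^bsub>AutoGroup G\<^esub> inv\<^bsub>AutoGroup G\<^esub> \<alpha>"
    by (simp only: AutoGroup_mult_inner_aut[OF \<alpha> inv_closed[OF g]])
  also have "\<dots> = ?c \<otimes>\<^bsub>AutoGroup G\<^esub> ?d"
    using \<alpha> c d by (simp add: Aut.m_assoc)
  also have "\<dots> = inner_aut G (g \<otimes> \<alpha> (inv g))"
    using g \<alpha>g by simp
  finally show ?thesis .
qed

lemma (in group_hom) normal_preimage:
  assumes "K \<lhd> H"
  shows "{x \<in> carrier G. h x \<in> K} \<lhd> G"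
proof -
  interpret K: normal K H by (rule assms)
  let ?q = "\<lambda>x. K #>\<^bsub>H\<^esub> h x"
  interpret q: group_hom G "H Mod K" ?q
    using Group.hom_compose[OF homh K.r_coset_hom_Mod] K.factorgroup_is_group
    by (simp add: group_hom_def group_hom_axioms_def comp_def)
  have coset_eq: "K #>\<^bsub>H\<^esub> y = K \<longleftrightarrow> y \<in> K" if "y \<in> carrier H" for y
    using H.coset_join1[OF _ that K.subgroup_axioms] H.coset_join2[OF that K.subgroup_axioms] by blast
  have "{x \<in> carrier G. h x \<in> K} = kernel G (H Mod K) ?q"
    unfolding kernel_def one_FactGroup
  proof (rule Collect_cong)
    show "x \<in> carrier G \<and> h x \<in> K \<longleftrightarrow> x \<in> carrier G \<and> K #>\<^bsub>H\<^esub> h x = K" for x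
      by (cases "x \<in> carrier G") (simp_all add: coset_eq)
  qed
  then show ?thesis
    using q.normal_kernel by simp
qed

lemma normal_AutoGroup_trivial_or_Inn_subset:
  assumes S: "simple_grp S" and K: "K \<lhd> AutoGroup S"
  shows "K = {\<one>\<^bsub>AutoGroup S\<^esub>} \<or> Inn S \<subseteq> K"
proof -
  interpret S: group S using S by (simp add: simple_grp_def)
  interpret Aut: group "AutoGroup S" by (rule S.AutoGroup)
  interpret K: normal K "AutoGroup S" by (rule K)
  interpret c: group_hom S "AutoGroup S" "inner_aut S"
    by unfold_locales (rule S.inner_aut_hom)
  define L where "L = {g \<in> carrier S. inner_aut S g \<in> K}"
  have "L \<lhd> S"
    unfolding L_def
    by (rule c.normal_preimage[OF K])
  then have "L = {\<one>\<^bsub>S\<^esub>} \<or> L = carrier S"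
    using S by (simp add: simple_grp_def)
  then show ?thesis
  proof
    assume "L = carrier S"
    then show ?thesis by (auto simp: Inn_eq_image L_def)
  next
    assume L: "L = {\<one>\<^bsub>S\<^esub>}"
    have "\<alpha> = \<one>\<^bsub>AutoGroup S\<^esub>" if \<alpha>K: "\<alpha> \<in> K" for \<alpha>
    proof -
      have \<alpha>: "\<alpha> \<in> carrier (AutoGroup S)" using \<alpha>K K.subset by blast
      have "\<alpha> (inv\<^bsub>S\<^esub> g) = inv\<^bsub>S\<^esub> g" if g: "g \<in> carrier S" for g
      proof -
        have \<alpha>g: "\<alpha> (inv\<^bsub>S\<^esub> g) \<in> carrier S"
          using \<alpha> g by (auto simp: carrier_AutoGroup auto_def hom_def)
        have "inner_aut S g \<otimes>\<^bsub>AutoGroup S\<^esub> \<alpha> \<otimes>\<^bsub>AutoGroup S\<^esub> inv\<^bsub>AutoGroup S\<^esub> inner_aut S g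
            \<otimes>\<^bsub>AutoGroup S\<^esub> inv\<^bsub>AutoGroup S\<^esub> \<alpha> \<in> K"
          using \<alpha>K g S.inner_aut_in_AutoGroup by (simp add: K.inv_op_closed2)
        then have "g \<otimes>\<^bsub>S\<^esub> \<alpha> (inv\<^bsub>S\<^esub> g) \<in> L"
          using g \<alpha>g by (simp only: S.commutator_inner_aut[OF \<alpha> g] L_def) simp
        then have "inv\<^bsub>S\<^esub> (\<alpha> (inv\<^bsub>S\<^esub> g)) = g"
          using g \<alpha>g L by (simp add: S.inv_equality)
        then show ?thesis
          using S.inv_inv[OF \<alpha>g] by simp
      qed
      then have "\<forall>y\<in>carrier S. \<alpha> y = y"
        by (metis S.inv_closed S.inv_inv)
      then show ?thesis
        using \<alpha> by (simp add: AutoGroup_eq_one_iff)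
    qed
    then show ?thesis using K.one_closed by blast
  qed
qed

lemma hom_AutoGroup_inj_or_Inn_kernel:
  assumes "simple_grp S" and "group T" and "\<phi> \<in> hom (AutoGroup S) T"
  shows "inj_on \<phi> (carrier (AutoGroup S)) \<or> Inn S \<subseteq> kernel (AutoGroup S) T \<phi>"
proof -
  interpret S: group S using assms(1) by (simp add: simple_grp_def)
  interpret \<phi>: group_hom "AutoGroup S" T \<phi>
    using assms(2,3) S.AutoGroup by (simp add: group_hom_def group_hom_axioms_def)
  show ?thesis
    using normal_AutoGroup_trivial_or_Inn_subset[OF assms(1) \<phi>.normal_kernel]
    by (auto simp: \<phi>.inj_on_one_iff kernel_def)
qed

lemma (in group) Inn_nontrivial:
  assumes "nonabelian G"
  shows "Inn G \<noteq> {\<one>\<^bsub>AutoGroup G\<^esub>}"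
proof -
  obtain x y where x: "x \<in> carrier G" and y: "y \<in> carrier G" and "x \<otimes> y \<noteq> y \<otimes> x"
    using assms by (auto simp: nonabelian_def)
  then have "inner_aut G x y \<noteq> y"
    by (auto simp: inner_aut_def inv_solve_right')
  then have "inner_aut G x \<noteq> \<one>\<^bsub>AutoGroup G\<^esub>"
    using y by (auto simp: one_AutoGroup)
  then show ?thesis
    using x by (auto simp: Inn_eq_image)
qed

lemma not_inj_if_Inn_kernel:
  assumes "group S" and "nonabelian S" and "Inn S \<subseteq> kernel (AutoGroup S) T \<phi>"
  shows "\<not> inj_on \<phi> (carrier (AutoGroup S))"
proof
  interpret S: group S by (rule assms(1))
  assume inj: "inj_on \<phi> (carrier (AutoGroup S))"
  have one: "\<one>\<^bsub>AutoGroup S\<^esub> \<in> Inn S"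
    using S.Inn_normal normal_imp_subgroup subgroup.one_closed by blast
  obtain c where c: "c \<in> Inn S" "c \<noteq> \<one>\<^bsub>AutoGroup S\<^esub>"
    using S.Inn_nontrivial[OF assms(2)] one by blast
  have "\<phi> c = \<phi> \<one>\<^bsub>AutoGroup S\<^esub>" "c \<in> carrier (AutoGroup S)" "\<one>\<^bsub>AutoGroup S\<^esub> \<in> carrier (AutoGroup S)"
    using c(1) one assms(3)[THEN subsetD] by (auto simp: kernel_def)
  then show False
    using inj c(2) by (simp add: inj_on_eq_iff)
qed

lemma co_hopfian_restrict_in_AutoGroup:
  assumes "co_hopfian T" and "monoid T" and "\<psi> \<in> hom T T" and "inj_on \<psi> (carrier T)"
  shows "restrict \<psi> (carrier T) \<in> carrier (AutoGroup T)"
proof -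
  have "bij_betw \<psi> (carrier T) (carrier T)"
    using assms(1,3,4) by (simp add: co_hopfian_def iso_def)
  moreover have "restrict \<psi> (carrier T) \<in> hom T T"
    using assms(2,3) by (auto simp: hom_def monoid.m_closed)
  ultimately show ?thesis
    by (simp add: carrier_AutoGroup auto_def Bij_def bij_betw_def inj_on_def)
qed

lemma AutoGroup_eq_if_agree:
  assumes "group T" and "E \<subseteq> carrier T"
    and fix_one: "\<forall>\<theta>\<in>carrier (AutoGroup T). (\<forall>x\<in>E. \<theta> x = x) \<longrightarrow> \<theta> = \<one>\<^bsub>AutoGroup T\<^esub>"
    and q1: "q1 \<in> carrier (AutoGroup T)" and q2: "q2 \<in> carrier (AutoGroup T)"
    and agree: "\<forall>x\<in>E. q1 x = q2 x"
  shows "q1 = q2"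
proof -
  interpret T: group T by (rule assms(1))
  interpret Aut: group "AutoGroup T" by (rule T.AutoGroup)
  let ?\<theta> = "inv\<^bsub>AutoGroup T\<^esub> q1 \<otimes>\<^bsub>AutoGroup T\<^esub> q2"
  have \<theta>: "?\<theta> \<in> carrier (AutoGroup T)" using q1 q2 by simp
  have "q1 \<otimes>\<^bsub>AutoGroup T\<^esub> ?\<theta> = q2"
    using q1 q2 by (simp flip: Aut.m_assoc)
  then have q1\<theta>: "compose (carrier T) q1 ?\<theta> = q2"
    using q1 \<theta> by (simp add: mult_AutoGroup carrier_AutoGroup)
  have "?\<theta> x = x" if x: "x \<in> E" for x
  proof -
    have \<theta>x: "?\<theta> x \<in> carrier T"
      using \<theta> x assms(2) by (auto simp: carrier_AutoGroup auto_def hom_def)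
    have "q1 (?\<theta> x) = q2 x"
      using fun_cong[OF q1\<theta>, of x] x assms(2) by (auto simp: compose_def)
    also have "\<dots> = q1 x" using agree x by simp
    finally show ?thesis
      using q1 \<theta>x x assms(2) by (auto simp: carrier_AutoGroup auto_def Bij_def bij_betw_def inj_on_def)
  qed
  then have "?\<theta> = \<one>\<^bsub>AutoGroup T\<^esub>" using fix_one \<theta> by blast
  then show ?thesis
    using \<open>q1 \<otimes>\<^bsub>AutoGroup T\<^esub> ?\<theta> = q2\<close> q1 by simp
qed

lemma (in group_hom) r_coset_some_repr:
  assumes "subgroup I G" and "subgroup J H" and "h ` I \<subseteq> J" and f: "f \<in> carrier G"
  shows "J #>\<^bsub>H\<^esub> h (SOME g. g \<in> I #> f) = J #>\<^bsub>H\<^esub> h f"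
proof -
  define g where "g = (SOME g. g \<in> I #> f)"
  have "f \<in> I #> f" using f assms(1) by (rule G.rcos_self)
  then have "g \<in> I #> f" unfolding g_def by (rule someI)
  then obtain i where i: "i \<in> I" and g: "g = i \<otimes> f"
    unfolding r_coset_def by blast
  have "i \<in> carrier G" using i assms(1) subgroup.subset by blast
  then have "h g \<in> J #>\<^bsub>H\<^esub> h f"
    using i f assms(3) by (auto simp: g r_coset_def)
  then show ?thesis
    unfolding g_def using H.repr_independence f assms(2) by (metis hom_closed)
qed

definition extends_uniquely ::
  "('x \<Rightarrow> 'y) \<Rightarrow> ('x, 'c) monoid_scheme \<Rightarrow> ('y, 'd) monoid_scheme \<Rightarrow> ('z, 'e) monoid_scheme
    \<Rightarrow> ('x \<Rightarrow> 'z) \<Rightarrow> bool" where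
  "extends_uniquely i S T U \<phi> \<longleftrightarrow>
     (\<exists>\<psi>\<in>hom T U. \<forall>x\<in>carrier S. \<psi> (i x) = \<phi> x) \<and>
     (\<forall>\<psi>1\<in>hom T U. \<forall>\<psi>2\<in>hom T U.
        (\<forall>x\<in>carrier S. \<psi>1 (i x) = \<phi> x) \<longrightarrow> (\<forall>x\<in>carrier S. \<psi>2 (i x) = \<phi> x)
        \<longrightarrow> (\<forall>y\<in>carrier T. \<psi>1 y = \<psi>2 y))"

lemma localization_iff_extends_uniquely:
  "localization i S T \<longleftrightarrow> i \<in> hom S T \<and> (\<forall>\<phi>\<in>hom S T. extends_uniquely i S T T \<phi>)"
  by (simp add: localization_def extends_uniquely_def)

lemma hom_Mod_lift:
  assumes "N \<lhd> G" and "\<psi> \<in> hom (G Mod N) U"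
  shows "(\<lambda>x. \<psi> (N #>\<^bsub>G\<^esub> x)) \<in> hom G U"
  using Group.hom_compose[OF normal.r_coset_hom_Mod[OF assms(1)] assms(2)] by (simp add: comp_def)

lemma hom_Mod_descend:
  assumes "N \<lhd> G" and "group U" and "\<psi> \<in> hom G U" and "N \<subseteq> kernel G U \<psi>"
  shows "\<exists>\<psi>'\<in>hom (G Mod N) U. \<forall>x\<in>carrier G. \<psi>' (N #>\<^bsub>G\<^esub> x) = \<psi> x"
proof -
  interpret \<psi>: group_hom G U \<psi>
    using assms by (simp add: normal_def group_hom_def group_hom_axioms_def)
  show ?thesis
    using \<psi>.FactGroup_universal_kernel[OF assms(1,4)] by metis
qed

context
  fixes A :: "('a, 'c) monoid_scheme" and B :: "('b, 'd) monoid_scheme"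
    and U :: "('u, 'e) monoid_scheme" and IA :: "'a set" and I :: "'b set"
    and j :: "'a \<Rightarrow> 'b" and k :: "'a set \<Rightarrow> 'b set" and \<phi> :: "'a \<Rightarrow> 'u" and \<phi>' :: "'a set \<Rightarrow> 'u"
  assumes U: "group U" and I: "I \<lhd> B" and j: "j \<in> hom A B"
    and k: "\<And>f. f \<in> carrier A \<Longrightarrow> k (IA #>\<^bsub>A\<^esub> f) = I #>\<^bsub>B\<^esub> j f"
    and \<phi>': "\<And>f. f \<in> carrier A \<Longrightarrow> \<phi>' (IA #>\<^bsub>A\<^esub> f) = \<phi> f"
    and extensions_kill_I:
      "\<And>\<psi>. \<psi> \<in> hom B U \<Longrightarrow> \<forall>x\<in>carrier A. \<psi> (j x) = \<phi> x \<Longrightarrow> I \<subseteq> kernel B U \<psi>"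
begin

lemma extends_along_Mod_iff:
  "(\<forall>C\<in>carrier (A Mod IA). \<psi> (k C) = \<phi>' C) \<longleftrightarrow> (\<forall>x\<in>carrier A. \<psi> (I #>\<^bsub>B\<^esub> j x) = \<phi> x)"
  by (auto simp: carrier_FactGroup k \<phi>')

lemma extension_descends_to_Mod:
  assumes "\<psi> \<in> hom B U" and "\<forall>x\<in>carrier A. \<psi> (j x) = \<phi> x"
  obtains \<psi>' where "\<psi>' \<in> hom (B Mod I) U" and "\<forall>b\<in>carrier B. \<psi>' (I #>\<^bsub>B\<^esub> b) = \<psi> b"
    and "\<forall>C\<in>carrier (A Mod IA). \<psi>' (k C) = \<phi>' C"
proof -
  obtain \<psi>' where \<psi>': "\<psi>' \<in> hom (B Mod I) U" "\<forall>b\<in>carrier B. \<psi>' (I #>\<^bsub>B\<^esub> b) = \<psi> b"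
    using hom_Mod_descend[OF I U assms(1) extensions_kill_I[OF assms]] by blast
  moreover have "\<forall>C\<in>carrier (A Mod IA). \<psi>' (k C) = \<phi>' C"
    using \<psi>'(2) assms(2) j by (auto simp: extends_along_Mod_iff hom_def Pi_iff)
  ultimately show thesis by (rule that)
qed

lemma extends_uniquely_Mod_if_extends_uniquely:
  assumes E: "extends_uniquely j A B U \<phi>"
  shows "extends_uniquely k (A Mod IA) (B Mod I) U \<phi>'"
proof -
  obtain \<psi> where "\<psi> \<in> hom B U" and "\<forall>x\<in>carrier A. \<psi> (j x) = \<phi> x"
    using E by (auto simp: extends_uniquely_def)
  then obtain \<psi>' where "\<psi>' \<in> hom (B Mod I) U" and "\<forall>C\<in>carrier (A Mod IA). \<psi>' (k C) = \<phi>' C"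
    by (rule extension_descends_to_Mod)
  moreover have "\<forall>D\<in>carrier (B Mod I). \<psi>1 D = \<psi>2 D"
    if \<psi>1: "\<psi>1 \<in> hom (B Mod I) U" and \<psi>2: "\<psi>2 \<in> hom (B Mod I) U"
      and "\<forall>C\<in>carrier (A Mod IA). \<psi>1 (k C) = \<phi>' C" "\<forall>C\<in>carrier (A Mod IA). \<psi>2 (k C) = \<phi>' C"
    for \<psi>1 \<psi>2
  proof -
    have "\<forall>x\<in>carrier A. \<psi>1 (I #>\<^bsub>B\<^esub> j x) = \<phi> x" "\<forall>x\<in>carrier A. \<psi>2 (I #>\<^bsub>B\<^esub> j x) = \<phi> x"
      using that(3,4) by (simp_all add: extends_along_Mod_iff)
    then have "\<forall>b\<in>carrier B. \<psi>1 (I #>\<^bsub>B\<^esub> b) = \<psi>2 (I #>\<^bsub>B\<^esub> b)"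
      using E[unfolded extends_uniquely_def, THEN conjunct2, rule_format,
          OF hom_Mod_lift[OF I \<psi>1] hom_Mod_lift[OF I \<psi>2]]
      by simp
    then show ?thesis by (auto simp: carrier_FactGroup)
  qed
  ultimately show ?thesis
    unfolding extends_uniquely_def by blast
qed

lemma extends_uniquely_if_extends_uniquely_Mod:
  assumes C: "extends_uniquely k (A Mod IA) (B Mod I) U \<phi>'"
  shows "extends_uniquely j A B U \<phi>"
proof -
  obtain \<psi>' where \<psi>': "\<psi>' \<in> hom (B Mod I) U" and "\<forall>C\<in>carrier (A Mod IA). \<psi>' (k C) = \<phi>' C"
    using C by (auto simp: extends_uniquely_def)
  then have "\<forall>x\<in>carrier A. \<psi>' (I #>\<^bsub>B\<^esub> j x) = \<phi> x"
    by (simp add: extends_along_Mod_iff)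
  moreover have "\<forall>b\<in>carrier B. \<psi>1 b = \<psi>2 b"
    if \<psi>1: "\<psi>1 \<in> hom B U" and \<psi>2: "\<psi>2 \<in> hom B U"
      and ext1: "\<forall>x\<in>carrier A. \<psi>1 (j x) = \<phi> x" and ext2: "\<forall>x\<in>carrier A. \<psi>2 (j x) = \<phi> x"
    for \<psi>1 \<psi>2
  proof -
    obtain \<psi>1' where \<psi>1': "\<psi>1' \<in> hom (B Mod I) U" "\<forall>b\<in>carrier B. \<psi>1' (I #>\<^bsub>B\<^esub> b) = \<psi>1 b"
      and "\<forall>C\<in>carrier (A Mod IA). \<psi>1' (k C) = \<phi>' C"
      using \<psi>1 ext1 by (rule extension_descends_to_Mod)
    moreover obtain \<psi>2' where \<psi>2': "\<psi>2' \<in> hom (B Mod I) U" "\<forall>b\<in>carrier B. \<psi>2' (I #>\<^bsub>B\<^esub> b) = \<psi>2 b"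
      and "\<forall>C\<in>carrier (A Mod IA). \<psi>2' (k C) = \<phi>' C"
      using \<psi>2 ext2 by (rule extension_descends_to_Mod)
    ultimately have "\<forall>D\<in>carrier (B Mod I). \<psi>1' D = \<psi>2' D"
      using C[unfolded extends_uniquely_def, THEN conjunct2] by blast
    then show ?thesis
      using \<psi>1'(2) \<psi>2'(2) by (auto simp: carrier_FactGroup)
  qed
  ultimately show ?thesis
    unfolding extends_uniquely_def using hom_Mod_lift[OF I \<psi>']
    by (intro conjI bexI[of _ "\<lambda>b. \<psi>' (I #>\<^bsub>B\<^esub> b)"]) auto
qed

lemma extends_uniquely_Mod_iff:
  "extends_uniquely j A B U \<phi> \<longleftrightarrow> extends_uniquely k (A Mod IA) (B Mod I) U \<phi>'"
  using extends_uniquely_Mod_if_extends_uniquely extends_uniquely_if_extends_uniquely_Mod by blast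

end

locale Aut_embedding =
  fixes H :: "('a, 'c) monoid_scheme" and G :: "('b, 'd) monoid_scheme"
    and j :: "('a \<Rightarrow> 'a) \<Rightarrow> ('b \<Rightarrow> 'b)"
  assumes simple_H: "simple_grp H" and nonabelian_H: "nonabelian H"
    and simple_G: "simple_grp G"
    and j_hom: "j \<in> hom (AutoGroup H) (AutoGroup G)"
    and j_inj: "inj_on j (carrier (AutoGroup H))"
    and j_Inn: "j ` Inn H \<subseteq> Inn G"
begin

sublocale H: group H using simple_H by (simp add: simple_grp_def)
sublocale G: group G using simple_G by (simp add: simple_grp_def)
sublocale A: group "AutoGroup H" by (rule H.AutoGroup)
sublocale B: group "AutoGroup G" by (rule G.AutoGroup)
sublocale J: group_hom "AutoGroup H" "AutoGroup G" j
  using j_hom by unfold_locales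

definition Inn_preimage :: "('a \<Rightarrow> 'a) set" where
  "Inn_preimage = {f \<in> carrier (AutoGroup H). j f \<in> Inn G}"

definition Out_map :: "('a \<Rightarrow> 'a) set \<Rightarrow> ('b \<Rightarrow> 'b) set" where
  "Out_map C = Inn G #>\<^bsub>AutoGroup G\<^esub> j (SOME f. f \<in> C)"

definition Out_proj :: "('a \<Rightarrow> 'a) set \<Rightarrow> ('a \<Rightarrow> 'a) set" where
  "Out_proj C = Inn_preimage #>\<^bsub>AutoGroup H\<^esub> (SOME f. f \<in> C)"

lemma Inn_preimage_normal: "Inn_preimage \<lhd> AutoGroup H"
  unfolding Inn_preimage_def by (rule J.normal_preimage[OF G.Inn_normal])

lemma Inn_subset_Inn_preimage: "Inn H \<subseteq> Inn_preimage"
  using j_Inn normal_imp_subgroup[OF H.Inn_normal] subgroup.subset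
  by (fastforce simp: Inn_preimage_def)

lemma Out_map_coset:
  "f \<in> carrier (AutoGroup H) \<Longrightarrow> Out_map (Inn H #>\<^bsub>AutoGroup H\<^esub> f) = Inn G #>\<^bsub>AutoGroup G\<^esub> j f"
  unfolding Out_map_def
  using J.r_coset_some_repr normal_imp_subgroup[OF H.Inn_normal] normal_imp_subgroup[OF G.Inn_normal] j_Inn
  by blast

lemma Out_proj_coset:
  assumes "f \<in> carrier (AutoGroup H)"
  shows "Out_proj (Inn H #>\<^bsub>AutoGroup H\<^esub> f) = Inn_preimage #>\<^bsub>AutoGroup H\<^esub> f"
proof -
  interpret id: group_hom "AutoGroup H" "AutoGroup H" "\<lambda>f. f"
    by unfold_locales (simp add: hom_def)
  show ?thesis
    unfolding Out_proj_def using assms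
    using id.r_coset_some_repr normal_imp_subgroup[OF H.Inn_normal]
      normal_imp_subgroup[OF Inn_preimage_normal] Inn_subset_Inn_preimage
    by simp
qed

lemma Inn_preimage_kernel:
  assumes ext: "\<forall>f\<in>carrier (AutoGroup H). \<psi> (j f) = \<phi> f"
    and ker: "Inn G \<subseteq> kernel (AutoGroup G) U \<psi>"
  shows "Inn_preimage \<subseteq> kernel (AutoGroup H) U \<phi>"
proof
  fix f assume "f \<in> Inn_preimage"
  then have f: "f \<in> carrier (AutoGroup H)" and "j f \<in> Inn G"
    by (auto simp: Inn_preimage_def)
  then have "\<psi> (j f) = \<one>\<^bsub>U\<^esub>"
    using ker[THEN subsetD] by (simp add: kernel_def)
  then show "f \<in> kernel (AutoGroup H) U \<phi>"
    using f ext by (simp add: kernel_def)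
qed

lemma extension_inj_iff:
  assumes \<psi>: "\<psi> \<in> hom (AutoGroup G) (AutoGroup G)"
    and ext: "\<forall>f\<in>carrier (AutoGroup H). \<psi> (j f) = \<phi> f"
  shows "inj_on \<psi> (carrier (AutoGroup G)) \<longleftrightarrow> inj_on \<phi> (carrier (AutoGroup H))"
proof
  assume "inj_on \<psi> (carrier (AutoGroup G))"
  then have "inj_on (\<psi> \<circ> j) (carrier (AutoGroup H))"
    using j_inj J.hom_closed by (blast intro: comp_inj_on inj_on_subset)
  then show "inj_on \<phi> (carrier (AutoGroup H))"
    using ext by (simp add: inj_on_def)
next
  assume inj: "inj_on \<phi> (carrier (AutoGroup H))"
  show "inj_on \<psi> (carrier (AutoGroup G))"
  proof (rule ccontr)
    assume "\<not> ?thesis"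
    then have "Inn G \<subseteq> kernel (AutoGroup G) (AutoGroup G) \<psi>"
      using hom_AutoGroup_inj_or_Inn_kernel[OF simple_G B.is_group \<psi>] by blast
    then have "Inn H \<subseteq> kernel (AutoGroup H) (AutoGroup G) \<phi>"
      using Inn_subset_Inn_preimage Inn_preimage_kernel[OF ext] by blast
    then show False
      using not_inj_if_Inn_kernel[OF H.is_group nonabelian_H] inj by blast
  qed
qed

lemma extension_Inn_kernel:
  assumes "\<psi> \<in> hom (AutoGroup G) (AutoGroup G)"
    and "\<forall>f\<in>carrier (AutoGroup H). \<psi> (j f) = \<phi> f"
    and "\<not> inj_on \<phi> (carrier (AutoGroup H))"
  shows "Inn G \<subseteq> kernel (AutoGroup G) (AutoGroup G) \<psi>"
  using hom_AutoGroup_inj_or_Inn_kernel[OF simple_G B.is_group assms(1)] extension_inj_iff assms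
  by blast

lemma restrict_extension_in_Aut:
  assumes "co_hopfian (AutoGroup G)" and \<psi>: "\<psi> \<in> hom (AutoGroup G) (AutoGroup G)"
    and ext: "\<forall>f\<in>carrier (AutoGroup H). \<psi> (j f) = \<phi> f" and "inj_on \<phi> (carrier (AutoGroup H))"
  shows "restrict \<psi> (carrier (AutoGroup G)) \<in> carrier (AutoGroup (AutoGroup G))"
proof -
  have "inj_on \<psi> (carrier (AutoGroup G))"
    using extension_inj_iff[OF \<psi> ext] assms(4) by simp
  then show ?thesis
    using co_hopfian_restrict_in_AutoGroup[OF assms(1) B.is_monoid \<psi>] by blast
qed

definition monos_transitive :: bool where
  "monos_transitive \<longleftrightarrow>
    (\<forall>\<kappa>\<in>hom (AutoGroup H) (AutoGroup G). inj_on \<kappa> (carrier (AutoGroup H)) \<longrightarrow>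
      (\<exists>\<theta>\<in>carrier (AutoGroup (AutoGroup G)). \<forall>f\<in>carrier (AutoGroup H). \<theta> (j f) = \<kappa> f))"

definition stabilizer_trivial :: bool where
  "stabilizer_trivial \<longleftrightarrow>
    (\<forall>\<theta>\<in>carrier (AutoGroup (AutoGroup G)).
      (\<forall>f\<in>carrier (AutoGroup H). \<theta> (j f) = j f) \<longrightarrow> \<theta> = \<one>\<^bsub>AutoGroup (AutoGroup G)\<^esub>)"

lemma monos_transitive_if_extends_uniquely:
  assumes "co_hopfian (AutoGroup G)"
    and unique: "\<forall>\<phi>\<in>hom (AutoGroup H) (AutoGroup G). inj_on \<phi> (carrier (AutoGroup H)) \<longrightarrow>
      extends_uniquely j (AutoGroup H) (AutoGroup G) (AutoGroup G) \<phi>"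
  shows monos_transitive
  unfolding monos_transitive_def
proof (intro ballI impI)
  fix \<kappa> assume "\<kappa> \<in> hom (AutoGroup H) (AutoGroup G)" and inj: "inj_on \<kappa> (carrier (AutoGroup H))"
  then obtain \<psi> where \<psi>: "\<psi> \<in> hom (AutoGroup G) (AutoGroup G)"
    and ext: "\<forall>f\<in>carrier (AutoGroup H). \<psi> (j f) = \<kappa> f"
    using unique unfolding extends_uniquely_def by blast
  moreover have "restrict \<psi> (carrier (AutoGroup G)) \<in> carrier (AutoGroup (AutoGroup G))"
    using restrict_extension_in_Aut[OF assms(1) \<psi> ext inj] .
  ultimately show "\<exists>\<theta>\<in>carrier (AutoGroup (AutoGroup G)). \<forall>f\<in>carrier (AutoGroup H). \<theta> (j f) = \<kappa> f"
    by (intro bexI[of _ "restrict \<psi> (carrier (AutoGroup G))"]) simp_all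
qed

lemma stabilizer_trivial_if_extends_uniquely:
  assumes unique: "extends_uniquely j (AutoGroup H) (AutoGroup G) (AutoGroup G) j"
  shows stabilizer_trivial
  unfolding stabilizer_trivial_def
proof (intro ballI impI)
  fix \<theta> assume \<theta>: "\<theta> \<in> carrier (AutoGroup (AutoGroup G))"
    and fix_j: "\<forall>f\<in>carrier (AutoGroup H). \<theta> (j f) = j f"
  have \<theta>_hom: "\<theta> \<in> hom (AutoGroup G) (AutoGroup G)"
    using \<theta> by (simp add: carrier_AutoGroup auto_def)
  have id: "(\<lambda>x\<in>carrier (AutoGroup G). x) \<in> hom (AutoGroup G) (AutoGroup G)"
    by (auto simp: hom_def)
  have id_ext: "(\<lambda>x\<in>carrier (AutoGroup G). x) (j f) = j f" if "f \<in> carrier (AutoGroup H)" for f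
    using that by simp
  have "\<forall>y\<in>carrier (AutoGroup G). \<theta> y = (\<lambda>x\<in>carrier (AutoGroup G). x) y"
    using unique[unfolded extends_uniquely_def, THEN conjunct2, rule_format,
        OF \<theta>_hom id fix_j[rule_format] id_ext]
    by blast
  then show "\<theta> = \<one>\<^bsub>AutoGroup (AutoGroup G)\<^esub>"
    using \<theta> by (simp add: AutoGroup_eq_one_iff)
qed

lemma extends_uniquely_if_monos_transitive:
  assumes "co_hopfian (AutoGroup G)" and monos_transitive and stabilizer_trivial
    and \<phi>: "\<phi> \<in> hom (AutoGroup H) (AutoGroup G)" and inj: "inj_on \<phi> (carrier (AutoGroup H))"
  shows "extends_uniquely j (AutoGroup H) (AutoGroup G) (AutoGroup G) \<phi>"
proof -
  have "\<forall>y\<in>carrier (AutoGroup G). \<psi>1 y = \<psi>2 y"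
    if \<psi>1: "\<psi>1 \<in> hom (AutoGroup G) (AutoGroup G)" and \<psi>2: "\<psi>2 \<in> hom (AutoGroup G) (AutoGroup G)"
      and ext1: "\<forall>f\<in>carrier (AutoGroup H). \<psi>1 (j f) = \<phi> f"
      and ext2: "\<forall>f\<in>carrier (AutoGroup H). \<psi>2 (j f) = \<phi> f" for \<psi>1 \<psi>2
  proof -
    have eq: "restrict \<psi>1 (carrier (AutoGroup G)) = restrict \<psi>2 (carrier (AutoGroup G))"
    proof (rule AutoGroup_eq_if_agree[OF B.is_group])
      show "j ` carrier (AutoGroup H) \<subseteq> carrier (AutoGroup G)"
        using J.hom_closed by blast
      show "\<forall>\<theta>\<in>carrier (AutoGroup (AutoGroup G)). (\<forall>x\<in>j ` carrier (AutoGroup H). \<theta> x = x)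
          \<longrightarrow> \<theta> = \<one>\<^bsub>AutoGroup (AutoGroup G)\<^esub>"
        using \<open>stabilizer_trivial\<close> by (simp add: stabilizer_trivial_def)
      show "restrict \<psi>1 (carrier (AutoGroup G)) \<in> carrier (AutoGroup (AutoGroup G))"
        "restrict \<psi>2 (carrier (AutoGroup G)) \<in> carrier (AutoGroup (AutoGroup G))"
        using restrict_extension_in_Aut[OF assms(1) _ _ inj] \<psi>1 \<psi>2 ext1 ext2 by blast+
      show "\<forall>x\<in>j ` carrier (AutoGroup H).
          restrict \<psi>1 (carrier (AutoGroup G)) x = restrict \<psi>2 (carrier (AutoGroup G)) x"
        using ext1 ext2 by auto
    qed
    show ?thesis
    proof
      fix y assume "y \<in> carrier (AutoGroup G)"
      then show "\<psi>1 y = \<psi>2 y" using fun_cong[OF eq, of y] by simp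
    qed
  qed
  moreover obtain \<theta> where "\<theta> \<in> carrier (AutoGroup (AutoGroup G))"
    and "\<forall>f\<in>carrier (AutoGroup H). \<theta> (j f) = \<phi> f"
    using \<open>monos_transitive\<close> \<phi> inj unfolding monos_transitive_def by blast
  then have "\<exists>\<psi>\<in>hom (AutoGroup G) (AutoGroup G). \<forall>f\<in>carrier (AutoGroup H). \<psi> (j f) = \<phi> f"
    by (auto simp: carrier_AutoGroup auto_def)
  ultimately show ?thesis
    unfolding extends_uniquely_def by blast
qed

lemma extends_uniquely_inj_iff:
  assumes "co_hopfian (AutoGroup G)"
  shows "(\<forall>\<phi>\<in>hom (AutoGroup H) (AutoGroup G). inj_on \<phi> (carrier (AutoGroup H)) \<longrightarrow>
            extends_uniquely j (AutoGroup H) (AutoGroup G) (AutoGroup G) \<phi>)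
    \<longleftrightarrow> monos_transitive \<and> stabilizer_trivial"
  using monos_transitive_if_extends_uniquely[OF assms] stabilizer_trivial_if_extends_uniquely
    extends_uniquely_if_monos_transitive[OF assms] j_hom j_inj
  by blast

definition Out_extends_uniquely :: bool where
  "Out_extends_uniquely \<longleftrightarrow>
    (\<forall>\<phi>'\<in>hom (AutoGroup H Mod Inn_preimage) (AutoGroup G).
      extends_uniquely Out_map (Out H) (Out G) (AutoGroup G) (\<lambda>C. \<phi>' (Out_proj C)))"

definition Inn_kernels_contain_Inn_preimage :: bool where
  "Inn_kernels_contain_Inn_preimage \<longleftrightarrow>
    (\<forall>\<phi>\<in>hom (AutoGroup H) (AutoGroup G).
      Inn H \<subseteq> kernel (AutoGroup H) (AutoGroup G) \<phi> \<longrightarrow>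
      Inn_preimage \<subseteq> kernel (AutoGroup H) (AutoGroup G) \<phi>)"

lemma extends_uniquely_iff_Out:
  assumes not_inj: "\<not> inj_on \<phi> (carrier (AutoGroup H))"
    and \<phi>': "\<And>f. f \<in> carrier (AutoGroup H) \<Longrightarrow> \<phi>' (Inn_preimage #>\<^bsub>AutoGroup H\<^esub> f) = \<phi> f"
  shows "extends_uniquely j (AutoGroup H) (AutoGroup G) (AutoGroup G) \<phi>
    \<longleftrightarrow> extends_uniquely Out_map (Out H) (Out G) (AutoGroup G) (\<lambda>C. \<phi>' (Out_proj C))"
  unfolding Out_def
proof (rule extends_uniquely_Mod_iff[OF B.is_group G.Inn_normal j_hom])
  show "Out_map (Inn H #>\<^bsub>AutoGroup H\<^esub> f) = Inn G #>\<^bsub>AutoGroup G\<^esub> j f"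
    "\<phi>' (Out_proj (Inn H #>\<^bsub>AutoGroup H\<^esub> f)) = \<phi> f"
    if "f \<in> carrier (AutoGroup H)" for f
    using that by (simp_all add: Out_map_coset Out_proj_coset \<phi>')
  show "Inn G \<subseteq> kernel (AutoGroup G) (AutoGroup G) \<psi>"
    if "\<psi> \<in> hom (AutoGroup G) (AutoGroup G)" "\<forall>f\<in>carrier (AutoGroup H). \<psi> (j f) = \<phi> f" for \<psi>
    using extension_Inn_kernel[OF that not_inj] .
qed

lemma Inn_kernel_Mod_Inn_preimage:
  assumes \<phi>': "\<phi>' \<in> hom (AutoGroup H Mod Inn_preimage) (AutoGroup G)"
  shows "Inn H \<subseteq> kernel (AutoGroup H) (AutoGroup G) (\<lambda>f. \<phi>' (Inn_preimage #>\<^bsub>AutoGroup H\<^esub> f))"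
proof
  interpret N: normal Inn_preimage "AutoGroup H" by (rule Inn_preimage_normal)
  fix c assume "c \<in> Inn H"
  then have c: "c \<in> Inn_preimage"
    using Inn_subset_Inn_preimage by (rule rev_subsetD)
  then have cA: "c \<in> carrier (AutoGroup H)"
    unfolding Inn_preimage_def by blast
  have "Inn_preimage #>\<^bsub>AutoGroup H\<^esub> c = \<one>\<^bsub>AutoGroup H Mod Inn_preimage\<^esub>"
    using A.coset_join2[OF cA N.subgroup_axioms c] by simp
  then show "c \<in> kernel (AutoGroup H) (AutoGroup G) (\<lambda>f. \<phi>' (Inn_preimage #>\<^bsub>AutoGroup H\<^esub> f))"
    using cA hom_one[OF \<phi>' N.factorgroup_is_group B.is_group] by (simp add: kernel_def)
qed

lemma Out_extends_uniquely_if_extends_uniquely: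
  assumes unique: "\<forall>\<phi>\<in>hom (AutoGroup H) (AutoGroup G). \<not> inj_on \<phi> (carrier (AutoGroup H)) \<longrightarrow>
      extends_uniquely j (AutoGroup H) (AutoGroup G) (AutoGroup G) \<phi>"
  shows Out_extends_uniquely
  unfolding Out_extends_uniquely_def
proof
  fix \<phi>' assume \<phi>': "\<phi>' \<in> hom (AutoGroup H Mod Inn_preimage) (AutoGroup G)"
  let ?\<phi> = "\<lambda>f. \<phi>' (Inn_preimage #>\<^bsub>AutoGroup H\<^esub> f)"
  have \<phi>: "?\<phi> \<in> hom (AutoGroup H) (AutoGroup G)"
    using hom_Mod_lift[OF Inn_preimage_normal \<phi>'] .
  have not_inj: "\<not> inj_on ?\<phi> (carrier (AutoGroup H))"
    using not_inj_if_Inn_kernel[OF H.is_group nonabelian_H Inn_kernel_Mod_Inn_preimage[OF \<phi>']] .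
  then have "extends_uniquely j (AutoGroup H) (AutoGroup G) (AutoGroup G) ?\<phi>"
    using unique \<phi> by blast
  then show "extends_uniquely Out_map (Out H) (Out G) (AutoGroup G) (\<lambda>C. \<phi>' (Out_proj C))"
    using extends_uniquely_iff_Out[OF not_inj] by simp
qed

lemma Inn_kernels_contain_Inn_preimage_if_extensible:
  assumes extensible: "\<forall>\<phi>\<in>hom (AutoGroup H) (AutoGroup G). \<not> inj_on \<phi> (carrier (AutoGroup H)) \<longrightarrow>
      (\<exists>\<psi>\<in>hom (AutoGroup G) (AutoGroup G). \<forall>f\<in>carrier (AutoGroup H). \<psi> (j f) = \<phi> f)"
  shows Inn_kernels_contain_Inn_preimage
  unfolding Inn_kernels_contain_Inn_preimage_def
proof (intro ballI impI)
  fix \<phi> assume \<phi>: "\<phi> \<in> hom (AutoGroup H) (AutoGroup G)"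
    and ker: "Inn H \<subseteq> kernel (AutoGroup H) (AutoGroup G) \<phi>"
  have not_inj: "\<not> inj_on \<phi> (carrier (AutoGroup H))"
    using not_inj_if_Inn_kernel[OF H.is_group nonabelian_H ker] .
  then obtain \<psi> where \<psi>: "\<psi> \<in> hom (AutoGroup G) (AutoGroup G)"
    and ext: "\<forall>f\<in>carrier (AutoGroup H). \<psi> (j f) = \<phi> f"
    using extensible \<phi> by blast
  show "Inn_preimage \<subseteq> kernel (AutoGroup H) (AutoGroup G) \<phi>"
    by (rule Inn_preimage_kernel[OF ext extension_Inn_kernel[OF \<psi> ext not_inj]])
qed

lemma extends_uniquely_if_Out_extends_uniquely:
  assumes Out_extends_uniquely and Inn_kernels_contain_Inn_preimage
    and \<phi>: "\<phi> \<in> hom (AutoGroup H) (AutoGroup G)" and not_inj: "\<not> inj_on \<phi> (carrier (AutoGroup H))"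
  shows "extends_uniquely j (AutoGroup H) (AutoGroup G) (AutoGroup G) \<phi>"
proof -
  interpret \<phi>: group_hom "AutoGroup H" "AutoGroup G" \<phi>
    using \<phi> by unfold_locales
  have "Inn H \<subseteq> kernel (AutoGroup H) (AutoGroup G) \<phi>"
    using hom_AutoGroup_inj_or_Inn_kernel[OF simple_H B.is_group \<phi>] not_inj by blast
  then have "Inn_preimage \<subseteq> kernel (AutoGroup H) (AutoGroup G) \<phi>"
    using \<open>Inn_kernels_contain_Inn_preimage\<close> \<phi> by (simp add: Inn_kernels_contain_Inn_preimage_def)
  then obtain \<phi>' where \<phi>': "\<phi>' \<in> hom (AutoGroup H Mod Inn_preimage) (AutoGroup G)"
    and \<phi>'_coset: "\<And>f. f \<in> carrier (AutoGroup H) \<Longrightarrow> \<phi>' (Inn_preimage #>\<^bsub>AutoGroup H\<^esub> f) = \<phi> f"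
    using \<phi>.FactGroup_universal_kernel[OF Inn_preimage_normal] by metis
  then show ?thesis
    using \<open>Out_extends_uniquely\<close> extends_uniquely_iff_Out[OF not_inj \<phi>'_coset]
    by (simp add: Out_extends_uniquely_def)
qed

lemma extends_uniquely_not_inj_iff:
  "(\<forall>\<phi>\<in>hom (AutoGroup H) (AutoGroup G). \<not> inj_on \<phi> (carrier (AutoGroup H)) \<longrightarrow>
       extends_uniquely j (AutoGroup H) (AutoGroup G) (AutoGroup G) \<phi>)
   \<longleftrightarrow> Out_extends_uniquely \<and> Inn_kernels_contain_Inn_preimage"
  using Out_extends_uniquely_if_extends_uniquely Inn_kernels_contain_Inn_preimage_if_extensible
    extends_uniquely_if_Out_extends_uniquely
  unfolding extends_uniquely_def by blast

end

theorem theorem3p3: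
  fixes H :: "'a monoid" and G :: "'b monoid"
    and j :: "('a \<Rightarrow> 'a) \<Rightarrow> ('b \<Rightarrow> 'b)"
    and N :: "('a \<Rightarrow> 'a) set"
    and k :: "('a \<Rightarrow> 'a) set \<Rightarrow> ('b \<Rightarrow> 'b) set"
    and \<pi> :: "('a \<Rightarrow> 'a) set \<Rightarrow> ('a \<Rightarrow> 'a) set"
  assumes "simple_grp H" and "nonabelian H"
    and "simple_grp G" and "nonabelian G"
    and "j \<in> hom (AutoGroup H) (AutoGroup G)"
    and "inj_on j (carrier (AutoGroup H))"
    and "j ` Inn H \<subseteq> Inn G"
    and "co_hopfian (AutoGroup G)"
    and "hyperabelian (Out G)"
    and N_def: "N = {f \<in> carrier (AutoGroup H). j f \<in> Inn G}"
    and k_def: "k = (\<lambda>C. Inn G #>\<^bsub>AutoGroup G\<^esub> j (SOME f. f \<in> C))"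
    and \<pi>_def: "\<pi> = (\<lambda>C. N #>\<^bsub>AutoGroup H\<^esub> (SOME f. f \<in> C))"
  shows "localization j (AutoGroup H) (AutoGroup G) \<longleftrightarrow>
    ((\<forall>\<kappa>\<in>hom (AutoGroup H) (AutoGroup G). inj_on \<kappa> (carrier (AutoGroup H)) \<longrightarrow>
        (\<exists>\<theta>\<in>carrier (AutoGroup (AutoGroup G)). \<forall>f\<in>carrier (AutoGroup H). \<theta> (j f) = \<kappa> f))
   \<and> (\<forall>\<theta>\<in>carrier (AutoGroup (AutoGroup G)).
        (\<forall>f\<in>carrier (AutoGroup H). \<theta> (j f) = j f) \<longrightarrow> \<theta> = \<one>\<^bsub>AutoGroup (AutoGroup G)\<^esub>)
   \<and> (\<forall>\<phi>'\<in>hom (AutoGroup H Mod N) (AutoGroup G).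
        (\<exists>\<psi>'\<in>hom (Out G) (AutoGroup G). \<forall>C\<in>carrier (Out H). \<psi>' (k C) = \<phi>' (\<pi> C)) \<and>
        (\<forall>\<psi>1\<in>hom (Out G) (AutoGroup G). \<forall>\<psi>2\<in>hom (Out G) (AutoGroup G).
           (\<forall>C\<in>carrier (Out H). \<psi>1 (k C) = \<phi>' (\<pi> C)) \<longrightarrow>
           (\<forall>C\<in>carrier (Out H). \<psi>2 (k C) = \<phi>' (\<pi> C)) \<longrightarrow>
           (\<forall>D\<in>carrier (Out G). \<psi>1 D = \<psi>2 D)))
   \<and> (\<forall>\<phi>\<in>hom (AutoGroup H) (AutoGroup G).
        Inn H \<subseteq> kernel (AutoGroup H) (AutoGroup G) \<phi> \<longrightarrow>
        N \<subseteq> kernel (AutoGroup H) (AutoGroup G) \<phi>))"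
proof -
  interpret Aut_embedding H G j
    using assms(1-3,5-7) by unfold_locales
  have N: "N = Inn_preimage" by (simp add: N_def Inn_preimage_def)
  have k: "k = Out_map" by (simp add: k_def Out_map_def[abs_def])
  have \<pi>: "\<pi> = Out_proj" by (simp add: \<pi>_def N Out_proj_def[abs_def])
  have "localization j (AutoGroup H) (AutoGroup G) \<longleftrightarrow>
      (\<forall>\<phi>\<in>hom (AutoGroup H) (AutoGroup G). inj_on \<phi> (carrier (AutoGroup H)) \<longrightarrow>
         extends_uniquely j (AutoGroup H) (AutoGroup G) (AutoGroup G) \<phi>) \<and>
      (\<forall>\<phi>\<in>hom (AutoGroup H) (AutoGroup G). \<not> inj_on \<phi> (carrier (AutoGroup H)) \<longrightarrow>
         extends_uniquely j (AutoGroup H) (AutoGroup G) (AutoGroup G) \<phi>)"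
    using localization_iff_extends_uniquely j_hom by blast
  then show ?thesis
    unfolding extends_uniquely_inj_iff[OF assms(8)] extends_uniquely_not_inj_iff N k \<pi>
      monos_transitive_def stabilizer_trivial_def Out_extends_uniquely_def
      Inn_kernels_contain_Inn_preimage_def
    by (simp add: extends_uniquely_def conj_assoc)
qed

end
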